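(* For an even integer $n\ge4$ and any integer $1\le k\le\frac{n-2}{2}$, $$\sum_{1\le i\le n/2}e_{2i}\,g_{n-2i,n}\prod_{j=k-i+1}^{\frac{n-2i}{2}}\frac{q^{2j}-1}{q^{2j-2k+2i}-1}=\frac{q^{(n-1)k}-1}{q-1}\prod_{j=k+1}^{n/2}\frac{q^{2j}-1}{q^{2j-2k}-1}.$$
   Context: $e_{2i}$ is the $E$-polynomial (in $q=uv$) of the variety of nondegenerate skew forms on $\mathbb C^{2i}$ up to scaling, i.e. of ${\mathrm{Pf}}^{\circ}(2i,\mathbb C^{2i})=\mathbb P(\wedge^2(\mathbb C^{2i})^{\vee})\setminus\{\text{degenerate forms}\}$. $g_{a,b}=\binom{b}{a}_q=\prod_{j=0}^{a-1}\frac{1-q^{b-j}}{1-q^{j+1}}$ is the $E$-polynomial of the Grassmannian $G(a,b)$. *)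

theory Defs
  imports Complex_Main
begin

text \<open>Gaussian binomial g_{a,b} = prod_{j=0}^{a-1} (1-q^{b-j})/(1-q^{j+1}),
  the E-polynomial of the Grassmannian G(a,b), evaluated at q.\<close>
definition gauss_g :: "complex \<Rightarrow> nat \<Rightarrow> nat \<Rightarrow> complex" where
  "gauss_g q a b = (\<Prod>j<a. (1 - q ^ (b - j)) / (1 - q ^ (j + 1)))"

text \<open>E-polynomial e_{2i} of the variety of nondegenerate skew forms on C^{2i}
  up to scaling (complement of the Pfaffian hypersurface in P(wedge^2)),
  given by its closed form q^{i(i-1)} prod_{j=1}^{i} (q^{2j-1}-1) / (q-1).\<close>
definition skew_e :: "complex \<Rightarrow> nat \<Rightarrow> complex" where
  "skew_e q i = q ^ (i * (i - 1)) * (\<Prod>j=1..i. (q ^ (2 * j - 1) - 1)) / (q - 1)"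

end

(* Write Q = q^2, m = n/2 and x = q^(n-1). For i > k the interval product of the i-th summand
   contains the factor j = 0, which vanishes. For i <= k, expressing e_(2i), g_(n-2i,n) and the
   interval product through q-factorials, the odd factors q^(2j-1) - 1 of [n]_q! combine with
   q^(i(i-1)) into (x;Q)_i = prod_(l<i) (x - Q^l), and the summand becomes C [k choose i]_Q (x;Q)_i
   with C independent of i. The q-binomial theorem x^k = sum_(i<=k) [k choose i]_Q (x;Q)_i, whose
   term i = 0 is 1, sums these to C (x^k - 1), which is the right-hand side. *)

theory Submission
  imports Defs
begin

(* (Q - 1)^a [a]_Q!, the q-factorial with its denominators Q - 1 cleared *)
definition qfact :: "'a::comm_ring_1 \<Rightarrow> nat \<Rightarrow> 'a" where
  "qfact Q a = (\<Prod>j=1..a. (Q ^ j - 1))"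

definition odd_qprod :: "'a::comm_ring_1 \<Rightarrow> nat \<Rightarrow> 'a" where
  "odd_qprod q a = (\<Prod>j=1..a. (q ^ (2 * j - 1) - 1))"

definition qfalling :: "'a::comm_ring_1 \<Rightarrow> 'a \<Rightarrow> nat \<Rightarrow> 'a" where
  "qfalling x Q i = (\<Prod>l<i. (x - Q ^ l))"

fun qbinom :: "'a::comm_semiring_1 \<Rightarrow> nat \<Rightarrow> nat \<Rightarrow> 'a" where
  "qbinom Q k 0 = 1"
| "qbinom Q 0 (Suc i) = 0"
| "qbinom Q (Suc k) (Suc i) = qbinom Q k i + Q ^ Suc i * qbinom Q k (Suc i)"

lemma qfact_0 [simp]: "qfact Q 0 = 1"
  by (simp add: qfact_def)

lemma qfact_Suc: "qfact Q (Suc a) = qfact Q a * (Q ^ Suc a - 1)"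
  by (simp add: qfact_def)

lemma odd_qprod_0 [simp]: "odd_qprod q 0 = 1"
  by (simp add: odd_qprod_def)

lemma odd_qprod_Suc: "odd_qprod q (Suc a) = odd_qprod q a * (q ^ (2 * a + 1) - 1)"
  by (simp add: odd_qprod_def)

lemma qfalling_0 [simp]: "qfalling x Q 0 = 1"
  by (simp add: qfalling_def)

lemma qfalling_Suc: "qfalling x Q (Suc i) = qfalling x Q i * (x - Q ^ i)"
  by (simp add: qfalling_def)

lemma qfact_diff_Suc: "i < k \<Longrightarrow> qfact Q (k - i) = qfact Q (k - Suc i) * (Q ^ (k - i) - 1)"
  using qfact_Suc [of Q "k - Suc i"] by (simp add: Suc_diff_Suc)

lemma qfact_nonzero:
  fixes Q :: "'a::idom"
  assumes "\<forall>m::nat. m > 0 \<longrightarrow> Q ^ m \<noteq> 1"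
  shows "qfact Q a \<noteq> 0"
  using assms by (induction a) (auto simp: qfact_Suc)

lemma odd_qprod_nonzero:
  fixes q :: "'a::idom"
  assumes "\<forall>m::nat. m > 0 \<longrightarrow> q ^ m \<noteq> 1"
  shows "odd_qprod q a \<noteq> 0"
  using assms by (induction a) (auto simp: odd_qprod_Suc)

lemma power2_not_root_of_unity:
  assumes "\<forall>m::nat. m > 0 \<longrightarrow> (q::'a::monoid_mult) ^ m \<noteq> 1"
  shows "\<forall>m::nat. m > 0 \<longrightarrow> (q ^ 2) ^ m \<noteq> 1"
  using assms by (auto simp flip: power_mult)

lemma qfact_double: "qfact q (2 * a) = qfact (q ^ 2) a * odd_qprod q a"
proof (induction a)
  case 0
  then show ?case by simp
next
  case (Suc a)
  have "qfact q (2 * Suc a) = qfact q (2 * a) * (q ^ (2 * a + 1) - 1) * (q ^ (2 * a + 2) - 1)"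
    by (simp add: qfact_Suc)
  also have "q ^ (2 * a + 2) = (q ^ 2) ^ Suc a"
    unfolding power_mult [symmetric] by simp
  finally show ?case
    using Suc.IH by (simp add: qfact_Suc odd_qprod_Suc)
qed

lemma qbinom_eq_0: "k < i \<Longrightarrow> qbinom Q k i = 0"
  by (induction Q k i rule: qbinom.induct) auto

lemma qbinom_qfact:
  fixes Q :: "'a::comm_ring_1"
  shows "i \<le> k \<Longrightarrow> qbinom Q k i * qfact Q i * qfact Q (k - i) = qfact Q k"
proof (induction k arbitrary: i)
  case 0
  then show ?case by simp
next
  case (Suc k)
  show ?case
  proof (cases i)
    case 0
    then show ?thesis by simp
  next
    case (Suc j)
    then have "j \<le> k"
      using Suc.prems by simp
    have left: "qbinom Q k j * qfact Q (Suc j) * qfact Q (k - j) = qfact Q k * (Q ^ Suc j - 1)"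
    proof -
      have "qbinom Q k j * qfact Q (Suc j) * qfact Q (k - j)
          = (qbinom Q k j * qfact Q j * qfact Q (k - j)) * (Q ^ Suc j - 1)"
        by (simp add: qfact_Suc ac_simps)
      then show ?thesis
        using Suc.IH [OF \<open>j \<le> k\<close>] by simp
    qed
    have right: "qbinom Q k (Suc j) * qfact Q (Suc j) * qfact Q (k - j) = qfact Q k * (Q ^ (k - j) - 1)"
    proof (cases "j = k")
      case True
      \<comment> \<open>both sides vanish, as \<open>Q ^ (k - k) - 1 = 0\<close>\<close>
      then show ?thesis by (simp add: qbinom_eq_0)
    next
      case False
      then have "j < k"
        using \<open>j \<le> k\<close> by simp
      then have "qbinom Q k (Suc j) * qfact Q (Suc j) * qfact Q (k - j)
          = (qbinom Q k (Suc j) * qfact Q (Suc j) * qfact Q (k - Suc j)) * (Q ^ (k - j) - 1)"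
        by (simp only: qfact_diff_Suc ac_simps)
      then show ?thesis
        using Suc.IH [of "Suc j"] \<open>j < k\<close> by simp
    qed
    have "Q ^ Suc j - 1 + Q ^ Suc j * (Q ^ (k - j) - 1) = Q ^ Suc k - 1"
      using \<open>j \<le> k\<close> by (simp add: algebra_simps flip: power_add)
    then have "qfact Q k * (Q ^ Suc j - 1) + Q ^ Suc j * (qfact Q k * (Q ^ (k - j) - 1))
        = qfact Q (Suc k)"
      by (simp add: qfact_Suc algebra_simps)
    moreover have "qbinom Q (Suc k) i * qfact Q i * qfact Q (Suc k - i)
        = qbinom Q k j * qfact Q (Suc j) * qfact Q (k - j)
          + Q ^ Suc j * (qbinom Q k (Suc j) * qfact Q (Suc j) * qfact Q (k - j))"
      using \<open>i = Suc j\<close> by (simp add: algebra_simps)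
    ultimately show ?thesis
      unfolding left right by simp
  qed
qed

(* The induction step rests on x * qfalling x Q i = qfalling x Q (Suc i) + Q ^ i * qfalling x Q i. *)
lemma power_eq_sum_qbinom_qfalling:
  fixes x Q :: "'a::comm_ring_1"
  shows "x ^ k = (\<Sum>i\<le>k. qbinom Q k i * qfalling x Q i)"
proof (induction k)
  case 0
  then show ?case by simp
next
  case (Suc k)
  have "(\<Sum>i\<le>Suc k. Q ^ i * qbinom Q k i * qfalling x Q i)
      = 1 + (\<Sum>i\<le>k. Q ^ Suc i * qbinom Q k (Suc i) * qfalling x Q (Suc i))"
    by (simp only: sum.atMost_Suc_shift) simp
  moreover have "(\<Sum>i\<le>Suc k. Q ^ i * qbinom Q k i * qfalling x Q i)
      = (\<Sum>i\<le>k. Q ^ i * qbinom Q k i * qfalling x Q i)"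
    by (simp add: qbinom_eq_0)
  ultimately have shift: "1 + (\<Sum>i\<le>k. Q ^ Suc i * qbinom Q k (Suc i) * qfalling x Q (Suc i))
      = (\<Sum>i\<le>k. Q ^ i * qbinom Q k i * qfalling x Q i)"
    by simp
  have "(\<Sum>i\<le>Suc k. qbinom Q (Suc k) i * qfalling x Q i)
      = 1 + (\<Sum>i\<le>k. qbinom Q k i * qfalling x Q (Suc i))
          + (\<Sum>i\<le>k. Q ^ Suc i * qbinom Q k (Suc i) * qfalling x Q (Suc i))"
    by (simp only: sum.atMost_Suc_shift qbinom.simps distrib_right sum.distrib) simp
  also have "\<dots> = (\<Sum>i\<le>k. qbinom Q k i * (qfalling x Q (Suc i) + Q ^ i * qfalling x Q i))"
    using shift by (simp add: sum.distrib algebra_simps)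
  also have "\<dots> = x * (\<Sum>i\<le>k. qbinom Q k i * qfalling x Q i)"
    by (simp add: qfalling_Suc sum_distrib_left algebra_simps)
  finally show ?case
    using Suc.IH by simp
qed

lemma prod_qratio_eq_qfact:
  fixes Q :: "'a::field"
  assumes "\<forall>m::nat. m > 0 \<longrightarrow> Q ^ m \<noteq> 1" and "d \<le> e"
  shows "(\<Prod>j=d+1..e. (Q ^ j - 1) / (Q ^ (j - d) - 1)) = qfact Q e / (qfact Q d * qfact Q (e - d))"
  using \<open>d \<le> e\<close>
proof (induction e rule: dec_induct)
  case base
  then show ?case
    using qfact_nonzero [OF assms(1)] by simp
next
  case (step e)
  have "qfact Q (Suc e - d) = qfact Q (e - d) * (Q ^ (Suc e - d) - 1)"
    using qfact_Suc [of Q "e - d"] step.hyps by (simp add: Suc_diff_le)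
  then have "qfact Q e / (qfact Q d * qfact Q (e - d)) * ((Q ^ Suc e - 1) / (Q ^ (Suc e - d) - 1))
      = qfact Q (Suc e) / (qfact Q d * qfact Q (Suc e - d))"
    by (simp add: qfact_Suc)
  then show ?case
    using step.IH step.hyps by (simp add: prod.cl_ivl_Suc)
qed

lemma gauss_g_eq_qfact:
  assumes "\<forall>m::nat. m > 0 \<longrightarrow> q ^ m \<noteq> 1" and "a \<le> b"
  shows "gauss_g q a b = qfact q b / (qfact q a * qfact q (b - a))"
proof -
  have "gauss_g q a b = (\<Prod>j<a. (q ^ (b - j) - 1) / (q ^ (j + 1) - 1))"
    unfolding gauss_g_def by (intro prod.cong refl) (metis minus_diff_eq minus_divide_divide)
  also have "\<dots> = qfact q b / (qfact q a * qfact q (b - a))"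
    using \<open>a \<le> b\<close>
  proof (induction a)
    case 0
    then show ?case
      using qfact_nonzero [OF assms(1)] by simp
  next
    case (Suc a)
    have "qfact q (b - a) = qfact q (b - Suc a) * (q ^ (b - a) - 1)"
      using Suc.prems by (simp add: qfact_diff_Suc)
    moreover have "q ^ (b - a) - 1 \<noteq> 0"
      using assms(1) Suc.prems by simp
    ultimately have "qfact q b / (qfact q a * qfact q (b - a)) * ((q ^ (b - a) - 1) / (q ^ Suc a - 1))
        = qfact q b / (qfact q (Suc a) * qfact q (b - Suc a))"
      by (simp add: qfact_Suc ac_simps)
    then show ?case
      using Suc by simp
  qed
  finally show ?thesis .
qed

lemma qfalling_odd_power:
  assumes "i \<le> m"
  shows "qfalling (q ^ (2 * m - 1)) (q ^ 2) i * odd_qprod q (m - i) = q ^ (i * (i - 1)) * odd_qprod q m"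
  using assms
proof (induction i)
  case 0
  then show ?case by simp
next
  case (Suc i)
  let ?x = "q ^ (2 * m - 1)" and ?r = "q ^ (2 * (m - Suc i) + 1) - 1"
  have odd_step: "odd_qprod q (m - i) = odd_qprod q (m - Suc i) * ?r"
    using odd_qprod_Suc [of q "m - Suc i"] Suc.prems by (simp add: Suc_diff_Suc)
  have factor: "?x - (q ^ 2) ^ i = (q ^ 2) ^ i * ?r"
  proof -
    have "2 * i + (2 * (m - Suc i) + 1) = 2 * m - 1"
      using Suc.prems by simp
    then have "(q ^ 2) ^ i * q ^ (2 * (m - Suc i) + 1) = ?x"
      by (metis power_add power_mult)
    then show ?thesis
      by (simp add: algebra_simps)
  qed
  have exponent: "q ^ (Suc i * (Suc i - 1)) = q ^ (i * (i - 1)) * (q ^ 2) ^ i"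
  proof -
    have "Suc i * (Suc i - 1) = i * (i - 1) + 2 * i"
      by (cases i) simp_all
    then show ?thesis
      by (simp only: power_add power_mult)
  qed
  have "qfalling ?x (q ^ 2) (Suc i) * odd_qprod q (m - Suc i)
      = qfalling ?x (q ^ 2) i * (odd_qprod q (m - Suc i) * ?r) * (q ^ 2) ^ i"
    unfolding qfalling_Suc factor by (simp only: ac_simps)
  also have "\<dots> = q ^ (i * (i - 1)) * odd_qprod q m * (q ^ 2) ^ i"
    unfolding odd_step [symmetric] using Suc by simp
  finally show ?case
    unfolding exponent by (simp only: ac_simps)
qed

lemma prod_powi_qratio_eq_qfact:
  fixes q :: "'a::field"
  assumes "\<forall>m::nat. m > 0 \<longrightarrow> q ^ m \<noteq> 1" and "d \<le> e"
  shows "(\<Prod>j\<in>{int d + 1 .. int e}. (q powi (2 * j) - 1) / (q powi (2 * j - 2 * int d) - 1))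
    = qfact (q ^ 2) e / (qfact (q ^ 2) d * qfact (q ^ 2) (e - d))"
proof -
  have "{int d + 1 .. int e} = int ` {d + 1 .. e}"
    by (simp add: image_int_atLeastAtMost)
  then have "(\<Prod>j\<in>{int d + 1 .. int e}. (q powi (2 * j) - 1) / (q powi (2 * j - 2 * int d) - 1))
      = (\<Prod>j=d+1..e. (q powi (2 * int j) - 1) / (q powi (2 * int j - 2 * int d) - 1))"
    by (simp add: prod.reindex)
  also have "\<dots> = (\<Prod>j=d+1..e. ((q ^ 2) ^ j - 1) / ((q ^ 2) ^ (j - d) - 1))"
  proof (intro prod.cong refl)
    fix j assume "j \<in> {d + 1 .. e}"
    then have "2 * int j - 2 * int d = int (2 * (j - d))" and "2 * int j = int (2 * j)"
      by simp_all
    then show "(q powi (2 * int j) - 1) / (q powi (2 * int j - 2 * int d) - 1)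
        = ((q ^ 2) ^ j - 1) / ((q ^ 2) ^ (j - d) - 1)"
      by (simp only: power_int_of_nat power_mult)
  qed
  also have "\<dots> = qfact (q ^ 2) e / (qfact (q ^ 2) d * qfact (q ^ 2) (e - d))"
    using prod_qratio_eq_qfact [OF power2_not_root_of_unity [OF assms(1)] assms(2)] .
  finally show ?thesis .
qed

lemma prod_powi_diff_one_eq_0:
  fixes q :: "'a::field" and g :: "int \<Rightarrow> 'a"
  assumes "c \<le> 0" and "0 \<le> e"
  shows "(\<Prod>j\<in>{c..e}. (q powi (2 * j) - 1) / g j) = 0"
  using assms by (intro prod_zero) (auto intro!: bexI [of _ 0])

lemma skew_summand_eq_qbinom_qfalling:
  fixes q :: complex
  assumes nt: "\<forall>m::nat. m > 0 \<longrightarrow> q ^ m \<noteq> 1" and n: "n = 2 * m" and "i \<le> k" and "k \<le> m"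
  shows "skew_e q i * gauss_g q (n - 2 * i) n *
      (\<Prod>j\<in>{int k - int i + 1 .. int ((n - 2 * i) div 2)}.
         (q powi (2 * j) - 1) / (q powi (2 * j - 2 * int k + 2 * int i) - 1))
    = qfact (q ^ 2) m / ((q - 1) * qfact (q ^ 2) k * qfact (q ^ 2) (m - k))
      * (qbinom (q ^ 2) k i * qfalling (q ^ (n - 1)) (q ^ 2) i)"
proof -
  let ?Q = "q ^ 2"
  have n_diff: "n - 2 * i = 2 * (m - i)"
    unfolding n by (simp add: diff_mult_distrib2)
  then have half: "(n - 2 * i) div 2 = m - i"
    by simp
  have skew: "skew_e q i = q ^ (i * (i - 1)) * odd_qprod q i / (q - 1)"
    by (simp add: skew_e_def odd_qprod_def)
  have gauss: "gauss_g q (n - 2 * i) n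
      = qfact ?Q m * odd_qprod q m / (qfact ?Q (m - i) * odd_qprod q (m - i) * (qfact ?Q i * odd_qprod q i))"
  proof -
    have le: "2 * (m - i) \<le> 2 * m" and diff: "2 * m - 2 * (m - i) = 2 * i"
      using assms(3,4) by simp_all
    show ?thesis
      unfolding n_diff unfolding n gauss_g_eq_qfact [OF nt le] diff qfact_double ..
  qed
  have interval: "(\<Prod>j\<in>{int k - int i + 1 .. int ((n - 2 * i) div 2)}.
         (q powi (2 * j) - 1) / (q powi (2 * j - 2 * int k + 2 * int i) - 1))
      = qfact ?Q (m - i) / (qfact ?Q (k - i) * qfact ?Q (m - k))"
  proof -
    have "(\<Prod>j\<in>{int k - int i + 1 .. int ((n - 2 * i) div 2)}.
         (q powi (2 * j) - 1) / (q powi (2 * j - 2 * int k + 2 * int i) - 1))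
      = (\<Prod>j\<in>{int (k - i) + 1 .. int (m - i)}.
         (q powi (2 * j) - 1) / (q powi (2 * j - 2 * int (k - i)) - 1))"
      unfolding half using assms(3) by (simp add: of_nat_diff algebra_simps)
    also have "\<dots> = qfact ?Q (m - i) / (qfact ?Q (k - i) * qfact ?Q (m - i - (k - i)))"
      using assms(3,4) by (intro prod_powi_qratio_eq_qfact [OF nt]) simp
    finally show ?thesis
      using assms(3) by simp
  qed
  have binom: "qbinom ?Q k i = qfact ?Q k / (qfact ?Q i * qfact ?Q (k - i))"
    using qbinom_qfact [OF assms(3), of ?Q] qfact_nonzero [OF power2_not_root_of_unity [OF nt]]
    by (simp add: field_simps)
  have falling: "qfalling (q ^ (n - 1)) ?Q i = q ^ (i * (i - 1)) * odd_qprod q m / odd_qprod q (m - i)"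
    using qfalling_odd_power [of i m q] assms(3,4) odd_qprod_nonzero [OF nt] n
    by (simp add: field_simps)
  have "q - 1 \<noteq> 0"
    using nt by (metis power_one_right right_minus_eq zero_less_one)
  then show ?thesis
    unfolding skew gauss interval binom falling
    using qfact_nonzero [OF power2_not_root_of_unity [OF nt]] odd_qprod_nonzero [OF nt]
    by (simp add: field_simps)
qed

theorem mainTheorem5:
  fixes n k :: nat and q :: complex
  assumes "even n" and "n \<ge> 4" and "1 \<le> k" and "k \<le> (n - 2) div 2"
    and "\<forall>m::nat. m > 0 \<longrightarrow> q ^ m \<noteq> 1"
  shows "(\<Sum>i=1..n div 2. skew_e q i * gauss_g q (n - 2 * i) n *
            (\<Prod>j\<in>{int k - int i + 1 .. int ((n - 2 * i) div 2)}.
               (q powi (2 * j) - 1) / (q powi (2 * j - 2 * int k + 2 * int i) - 1)))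
         = (q ^ ((n - 1) * k) - 1) / (q - 1) *
           (\<Prod>j=k+1..n div 2. (q ^ (2 * j) - 1) / (q ^ (2 * j - 2 * k) - 1))"
proof -
  obtain m where n: "n = 2 * m"
    using \<open>even n\<close> by (rule evenE)
  have "k < m"
    using assms(2-4) n by simp
  define C where "C = qfact (q ^ 2) m / ((q - 1) * qfact (q ^ 2) k * qfact (q ^ 2) (m - k))"
  define T where "T i = skew_e q i * gauss_g q (n - 2 * i) n *
    (\<Prod>j\<in>{int k - int i + 1 .. int ((n - 2 * i) div 2)}.
       (q powi (2 * j) - 1) / (q powi (2 * j - 2 * int k + 2 * int i) - 1))" for i
  have "T i = 0" if "k < i" for i
    unfolding T_def using that by (subst prod_powi_diff_one_eq_0) simp_all
  then have "(\<Sum>i=1..n div 2. T i) = (\<Sum>i=1..k. T i)"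
    using \<open>k < m\<close> n by (intro sum.mono_neutral_right) auto
  also have "\<dots> = C * (\<Sum>i=1..k. qbinom (q ^ 2) k i * qfalling (q ^ (n - 1)) (q ^ 2) i)"
    unfolding sum_distrib_left T_def C_def
    using skew_summand_eq_qbinom_qfalling [OF assms(5) n] \<open>k < m\<close> by (intro sum.cong) simp_all
  also have "\<dots> = C * ((q ^ (n - 1)) ^ k - 1)"
    using power_eq_sum_qbinom_qfalling [of "q ^ (n - 1)" k "q ^ 2"]
    by (simp add: atMost_atLeast0 sum.atLeast_Suc_atMost)
  also have "\<dots> = (q ^ ((n - 1) * k) - 1) / (q - 1) *
           (\<Prod>j=k+1..n div 2. (q ^ (2 * j) - 1) / (q ^ (2 * j - 2 * k) - 1))"
    unfolding n diff_mult_distrib2 [symmetric] power_mult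
    using prod_qratio_eq_qfact [OF power2_not_root_of_unity [OF assms(5)], of k m] \<open>k < m\<close>
    by (simp add: C_def ac_simps)
  finally show ?thesis
    unfolding T_def .
qed

end
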